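(* Let $N,M,m\in\mathbb{N}$ with $M\geq 3$, and let $T:\mathbb{C}^N\times\cdots\times\mathbb{C}^N\to\mathbb{C}$ be an $m$-linear form, where each copy of $\mathbb{C}^N$ carries the sup norm. Let $\|T\|=\sup\{|T(x^{(1)},\ldots,x^{(m)})|:\|x^{(i)}\|_\infty\leq 1,\ 1\le i\le m\}$ and $\|T\|_M=\sup\{|T(x^{(1)},\ldots,x^{(m)})|: x^{(1)},\ldots,x^{(m)}\in D_M^N\}$. Then $$\|T\|_M\leq \|T\|\leq r_M^{-m}\|T\|_M.$$
   Context: $T_M=\{\exp(2j\pi i/M): j=0,\ldots,M-1\}$ is the set of $M$th roots of unity, $D_M=\operatorname{conv}(T_M)\subset\mathbb{C}$, $D_M^N=D_M\times\cdots\times D_M$ ($N$ factors), and $r_M=\left(\frac12+\frac12\cos\left(\frac{2\pi}{M}\right)\right)^{1/2}$. *)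

theory Defs
  imports "HOL-Analysis.Analysis"
begin

text \<open>Vectors in C^N are functions nat => complex (only indices j < N matter);
an m-tuple of such vectors is a function nat => (nat => complex) (only i < m matter).\<close>

definition roots_of_unity :: "nat \<Rightarrow> complex set" where
  "roots_of_unity M = {cis (2 * pi * real j / real M) | j. j < M}"

definition D :: "nat \<Rightarrow> complex set" where
  "D M = convex hull (roots_of_unity M)"

definition rM :: "nat \<Rightarrow> real" where
  "rM M = sqrt (1/2 + 1/2 * cos (2 * pi / real M))"

definition multilinear_form ::
  "nat \<Rightarrow> nat \<Rightarrow> ((nat \<Rightarrow> nat \<Rightarrow> complex) \<Rightarrow> complex) \<Rightarrow> bool" where
  "multilinear_form N m T \<longleftrightarrow>
     (\<forall>x y. (\<forall>i<m. \<forall>j<N. x i j = y i j) \<longrightarrow> T x = T y) \<and>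
     (\<forall>x i u v (a::complex) b. i < m \<longrightarrow>
        T (x(i := (\<lambda>j. a * u j + b * v j))) = a * T (x(i := u)) + b * T (x(i := v)))"

definition form_norm ::
  "nat \<Rightarrow> nat \<Rightarrow> ((nat \<Rightarrow> nat \<Rightarrow> complex) \<Rightarrow> complex) \<Rightarrow> real" where
  "form_norm N m T = Sup {cmod (T x) | x. \<forall>i<m. \<forall>j<N. cmod (x i j) \<le> 1}"

definition form_normM ::
  "nat \<Rightarrow> nat \<Rightarrow> nat \<Rightarrow> ((nat \<Rightarrow> nat \<Rightarrow> complex) \<Rightarrow> complex) \<Rightarrow> real" where
  "form_normM M N m T = Sup {cmod (T x) | x. \<forall>i<m. \<forall>j<N. x i j \<in> D M}"

end

theory Submission
  imports Defs
begin

text \<open>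
  Every unit direction lies within angle \<open>\<pi>/M\<close> of some \<open>M\<close>-th root of unity, so no linear
  functional can separate a point of modulus at most \<open>cos (\<pi>/M) = r\<^sub>M\<close> from the roots:
  \<open>D\<^sub>M\<close> contains the closed disc of radius \<open>r\<^sub>M\<close>, and it lies in the closed unit disc.
  Scaling the unit polydisc by \<open>r\<^sub>M\<close> therefore lands in \<open>D\<^sub>M\<^sup>N\<close>, and an \<open>m\<close>-linear form
  picks up exactly the factor \<open>r\<^sub>M\<^sup>m\<close>. Both suprema are finite because expanding every
  argument along the coordinate vectors bounds \<open>T\<close> on the unit polydisc.
\<close>

lemma inner_cis: "inner c (cis \<phi>) = cmod c * cos (Arg c - \<phi>)"
proof (cases "c = 0")
  case False
  have "Re c = cmod c * cos (Arg c)" "Im c = cmod c * sin (Arg c)"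
    by (metis Re_rcis rcis_cmod_Arg, metis Im_rcis rcis_cmod_Arg)
  then show ?thesis
    by (simp add: inner_complex_def cos_diff algebra_simps)
qed simp

lemma finite_roots_of_unity: "finite (roots_of_unity M)"
  unfolding roots_of_unity_def by simp

lemma cis_int_in_roots_of_unity:
  assumes "M \<ge> 1"
  shows "cis (2 * pi * of_int k / M) \<in> roots_of_unity M"
proof -
  define q where "q = k div int M"
  define j where "j = nat (k mod int M)"
  have j: "j < M" unfolding j_def using assms by (simp add: nat_less_iff)
  have "k = q * int M + int j" unfolding q_def j_def using assms by simp
  then have "real_of_int k = real_of_int q * real M + real j"
    by (metis of_int_add of_int_mult of_int_of_nat_eq)
  then have "2 * pi * of_int k / M = 2 * pi * of_int q + 2 * pi * real j / M"
    using assms by (simp add: field_simps)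
  then have "cis (2 * pi * of_int k / M) = cis (2 * pi * real j / M)"
    by (simp add: cis_mult[symmetric])
  then show ?thesis using j unfolding roots_of_unity_def by blast
qed

lemma roots_of_unity_near_direction:
  assumes "M \<ge> 1"
  shows "\<exists>w\<in>roots_of_unity M. inner c w \<ge> cmod c * cos (pi / M)"
proof -
  define k where "k = round (Arg c * M / (2 * pi))"
  have M_pos: "real M > 0" using assms by simp
  have "Arg c - 2 * pi * of_int k / M = (2 * pi / M) * (Arg c * M / (2 * pi) - of_int k)"
    using M_pos by (simp add: field_simps)
  then have "\<bar>Arg c - 2 * pi * of_int k / M\<bar> = (2 * pi / M) * \<bar>Arg c * M / (2 * pi) - of_int k\<bar>"
    by (simp add: abs_mult)
  also have "\<dots> \<le> (2 * pi / M) * (1/2)"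
    using of_int_round_abs_le[of "Arg c * M / (2 * pi)"] unfolding k_def
    by (intro mult_left_mono) (auto simp: abs_minus_commute)
  finally have "\<bar>Arg c - 2 * pi * of_int k / M\<bar> \<le> pi / M" by simp
  moreover have "pi / M \<le> pi" using assms by (simp add: field_simps)
  ultimately have "cos (pi / M) \<le> cos (Arg c - 2 * pi * of_int k / M)"
    using cos_monotone_0_pi_le[of "\<bar>Arg c - 2 * pi * of_int k / M\<bar>" "pi / M"] by simp
  then have "inner c (cis (2 * pi * of_int k / M)) \<ge> cmod c * cos (pi / M)"
    by (simp add: inner_cis mult_left_mono)
  then show ?thesis using cis_int_in_roots_of_unity[OF assms] by blast
qed

lemma cball_cos_subset_D:
  assumes "M \<ge> 1"
  shows "cball 0 (cos (pi / M)) \<subseteq> D M"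
proof
  fix z :: complex
  assume z: "z \<in> cball 0 (cos (pi / M))"
  show "z \<in> D M"
  proof (rule ccontr)
    assume "z \<notin> D M"
    moreover have "closed (D M)"
      unfolding D_def by (intro compact_imp_closed finite_imp_compact_convex_hull finite_roots_of_unity)
    moreover have "convex (D M)" unfolding D_def by simp
    ultimately obtain a b where ab: "inner a z < b" "\<forall>x\<in>D M. inner a x > b"
      using separating_hyperplane_closed_point by blast
    obtain w where w: "w \<in> roots_of_unity M" "inner (- a) w \<ge> cmod a * cos (pi / M)"
      using roots_of_unity_near_direction[OF assms, of "- a"] by auto
    have "w \<in> D M" unfolding D_def using w(1) by (rule hull_inc)
    then have "inner a w > b" using ab(2) by blast
    moreover have "inner (- a) z \<le> cmod a * cos (pi / M)"
      using Cauchy_Schwarz_ineq2[of "- a" z] z mult_left_mono[of "cmod z" "cos (pi / M)" "cmod a"]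
      by simp
    ultimately show False using ab(1) w(2) unfolding inner_minus_left by linarith
  qed
qed

lemma D_subset_unit_cball: "D M \<subseteq> cball 0 1"
  unfolding D_def roots_of_unity_def by (rule hull_minimal) auto

lemma norm_le_one_if_in_D: "z \<in> D M \<Longrightarrow> cmod z \<le> 1"
  using D_subset_unit_cball[of M] by auto

lemma one_in_D: "M \<ge> 1 \<Longrightarrow> 1 \<in> D M"
  unfolding D_def roots_of_unity_def by (intro hull_inc) (auto intro!: exI[of _ 0])

lemma rM_eq_cos:
  assumes "M \<ge> 2"
  shows "rM M = cos (pi / M)"
proof -
  have "pi / M \<le> pi / 2" using assms by (intro divide_left_mono) auto
  moreover have "- (pi / 2) \<le> pi / M" by (rule order_trans[of _ 0]) auto
  ultimately have "cos (pi / M) \<ge> 0" by (rule cos_ge_zero[rotated])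
  moreover have "1/2 + 1/2 * cos (2 * pi / M) = (cos (pi / M))\<^sup>2"
    using cos_double_cos[of "pi / M"] by (simp add: algebra_simps)
  ultimately show ?thesis unfolding rM_def by simp
qed

lemma rM_pos:
  assumes "M \<ge> 3"
  shows "rM M > 0"
proof -
  have "pi / M < pi / 2" using assms by (intro divide_strict_left_mono) auto
  then have "cos (pi / M) > 0" using assms by (intro cos_gt_zero) auto
  then show ?thesis using rM_eq_cos[of M] assms by simp
qed

definition coord_vec :: "nat \<Rightarrow> nat \<Rightarrow> complex" where
  "coord_vec j = (\<lambda>l. if l = j then 1 else 0)"

lemma multilinear_form_cong:
  assumes "multilinear_form N m T" "\<And>i j. i < m \<Longrightarrow> j < N \<Longrightarrow> x i j = y i j"
  shows "T x = T y"
  using assms unfolding multilinear_form_def by blast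

lemma multilinear_form_linear:
  assumes "multilinear_form N m T" "i < m"
  shows "T (x(i := (\<lambda>j. a * u j + b * v j))) = a * T (x(i := u)) + b * T (x(i := v))"
  using assms unfolding multilinear_form_def by blast

lemma multilinear_form_sum:
  assumes "multilinear_form N m T" "i < m" "finite S"
  shows "T (x(i := (\<lambda>l. \<Sum>k\<in>S. c k * v k l))) = (\<Sum>k\<in>S. c k * T (x(i := v k)))"
  using assms(3)
proof (induction S)
  case empty
  have "T (x(i := (\<lambda>_. 0 * 0 + 0 * 0))) = 0 * T (x(i := (\<lambda>_. 0))) + 0 * T (x(i := (\<lambda>_. 0)))"
    by (rule multilinear_form_linear[OF assms(1,2)])
  then show ?case by (simp only: sum.empty mult_zero_left add_0)
next
  case (insert k S)
  have "T (x(i := (\<lambda>l. c k * v k l + 1 * (\<Sum>k'\<in>S. c k' * v k' l))))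
        = c k * T (x(i := v k)) + 1 * T (x(i := (\<lambda>l. \<Sum>k'\<in>S. c k' * v k' l)))"
    by (rule multilinear_form_linear[OF assms(1,2)])
  then show ?case using insert.IH by (simp only: sum.insert[OF insert.hyps] mult_1_left)
qed

lemma multilinear_form_expand_row:
  assumes "multilinear_form N m T" "i < m"
  shows "T (x(i := u)) = (\<Sum>j<N. u j * T (x(i := coord_vec j)))"
proof -
  have "T (x(i := u)) = T (x(i := (\<lambda>l. \<Sum>j<N. u j * coord_vec j l)))"
    by (rule multilinear_form_cong[OF assms(1)]) (auto simp: coord_vec_def if_distrib cong: if_cong)
  also have "\<dots> = (\<Sum>j<N. u j * T (x(i := coord_vec j)))"
    by (rule multilinear_form_sum[OF assms finite_lessThan])
  finally show ?thesis .
qed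

lemma multilinear_form_homogeneous:
  assumes "multilinear_form N m T"
  shows "T (\<lambda>i j. c * x i j) = c ^ m * T x"
proof -
  have "k \<le> m \<Longrightarrow> T (\<lambda>i j. if i < k then c * x i j else x i j) = c ^ k * T x" for k
  proof (induction k)
    case (Suc k)
    define y where "y = (\<lambda>i j. if i < k then c * x i j else x i j)"
    have "(\<lambda>i j. if i < Suc k then c * x i j else x i j) = y(k := (\<lambda>j. c * y k j + 0 * y k j))"
      by (auto simp: y_def fun_eq_iff)
    then have "T (\<lambda>i j. if i < Suc k then c * x i j else x i j) = c * T y"
      using multilinear_form_linear[OF assms, of k y c "y k" 0 "y k"] Suc.prems by simp
    then show ?case using Suc by (simp add: y_def)
  qed simp
  moreover have "T (\<lambda>i j. c * x i j) = T (\<lambda>i j. if i < m then c * x i j else x i j)"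
    by (rule multilinear_form_cong[OF assms]) auto
  ultimately show ?thesis by simp
qed

text \<open>
  Rows from \<open>k\<close> on are already coordinate vectors; the induction step expands row \<open>k\<close>
  along the coordinate vectors, costing a factor \<open>N\<close>.
\<close>

lemma multilinear_form_bound_partial:
  assumes "multilinear_form N m T"
  defines "C \<equiv> (\<Sum>g\<in>{..<m} \<rightarrow>\<^sub>E {..<N}. cmod (T (\<lambda>i. coord_vec (g i))))"
  shows "k \<le> m \<Longrightarrow> \<forall>i<k. \<forall>j<N. cmod (x i j) \<le> 1 \<Longrightarrow>
     \<forall>i. k \<le> i \<and> i < m \<longrightarrow> g i < N \<and> x i = coord_vec (g i) \<Longrightarrow>
     cmod (T x) \<le> real N ^ k * C"
proof (induction k arbitrary: x g)
  case 0
  define g' where "g' = restrict g {..<m}"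
  have "T x = T (\<lambda>i. coord_vec (g' i))"
    by (rule multilinear_form_cong[OF assms(1)]) (use 0 in \<open>auto simp: g'_def\<close>)
  moreover have "g' \<in> {..<m} \<rightarrow>\<^sub>E {..<N}" using 0 unfolding g'_def by auto
  then have "cmod (T (\<lambda>i. coord_vec (g' i))) \<le> C"
    unfolding C_def by (rule member_le_sum) (auto intro: finite_PiE)
  ultimately show ?case by simp
next
  case (Suc k)
  have "T x = (\<Sum>j<N. x k j * T (x(k := coord_vec j)))"
    using multilinear_form_expand_row[OF assms(1), of k x "x k"] Suc.prems by simp
  also have "cmod \<dots> \<le> (\<Sum>j<N. cmod (x k j) * cmod (T (x(k := coord_vec j))))"
    by (rule order_trans[OF norm_sum]) (simp add: norm_mult)
  also have "\<dots> \<le> (\<Sum>j<N. 1 * (real N ^ k * C))"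
  proof (rule sum_mono)
    fix j assume j: "j \<in> {..<N}"
    have "cmod (T (x(k := coord_vec j))) \<le> real N ^ k * C"
      by (rule Suc.IH[of _ "g(k := j)"]) (use Suc.prems j in auto)
    moreover have "cmod (x k j) \<le> 1" using Suc.prems j by auto
    ultimately show "cmod (x k j) * cmod (T (x(k := coord_vec j))) \<le> 1 * (real N ^ k * C)"
      by (intro mult_mono) auto
  qed
  also have "\<dots> = real N ^ Suc k * C" by simp
  finally show ?case .
qed

lemma multilinear_form_bdd_above_polydisc:
  assumes "multilinear_form N m T"
  shows "bdd_above {cmod (T x) | x. \<forall>i<m. \<forall>j<N. cmod (x i j) \<le> 1}"
proof (rule bdd_aboveI)
  fix a assume "a \<in> {cmod (T x) | x. \<forall>i<m. \<forall>j<N. cmod (x i j) \<le> 1}"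
  then obtain x where a: "a = cmod (T x)" and x: "\<forall>i<m. \<forall>j<N. cmod (x i j) \<le> 1" by blast
  show "a \<le> real N ^ m * (\<Sum>g\<in>{..<m} \<rightarrow>\<^sub>E {..<N}. cmod (T (\<lambda>i. coord_vec (g i))))"
    unfolding a by (rule multilinear_form_bound_partial[OF assms, of m x]) (use x in auto)
qed

lemma form_normM_le_form_norm:
  assumes "multilinear_form N m T" "M \<ge> 1"
  shows "form_normM M N m T \<le> form_norm N m T"
  unfolding form_normM_def form_norm_def
proof (rule cSup_subset_mono)
  show "{cmod (T x) | x. \<forall>i<m. \<forall>j<N. x i j \<in> D M} \<noteq> {}"
    using one_in_D[OF assms(2)] by auto
  show "{cmod (T x) | x. \<forall>i<m. \<forall>j<N. x i j \<in> D M}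
        \<subseteq> {cmod (T x) | x. \<forall>i<m. \<forall>j<N. cmod (x i j) \<le> 1}"
    by (blast dest: norm_le_one_if_in_D)
qed (rule multilinear_form_bdd_above_polydisc[OF assms(1)])

lemma form_norm_le_form_normM:
  assumes "multilinear_form N m T" "r > 0" "cball 0 r \<subseteq> D M"
  shows "r ^ m * form_norm N m T \<le> form_normM M N m T"
proof -
  let ?B = "{cmod (T x) | x. \<forall>i<m. \<forall>j<N. x i j \<in> D M}"
  have "bdd_above ?B"
    using multilinear_form_bdd_above_polydisc[OF assms(1)]
    by (rule bdd_above_mono) (blast dest: norm_le_one_if_in_D)
  have "cmod (T x) \<le> Sup ?B / r ^ m" if x: "\<forall>i<m. \<forall>j<N. cmod (x i j) \<le> 1" for x
  proof -
    have "\<forall>i<m. \<forall>j<N. of_real r * x i j \<in> D M"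
      using x assms(2,3) by (auto simp: norm_mult intro!: mult_left_le)
    then have "cmod (T (\<lambda>i j. of_real r * x i j)) \<le> Sup ?B"
      by (intro cSup_upper[OF _ \<open>bdd_above ?B\<close>]) blast
    then show ?thesis
      using assms(2) by (simp add: multilinear_form_homogeneous[OF assms(1)] norm_mult norm_power
          field_simps)
  qed
  then have "form_norm N m T \<le> Sup ?B / r ^ m"
    unfolding form_norm_def by (intro cSup_least) (auto intro!: exI[of _ "\<lambda>_ _. 0"])
  then show ?thesis
    using assms(2) unfolding form_normM_def by (simp add: field_simps)
qed

theorem mainTheorem2:
  fixes N M m :: nat
    and T :: "(nat \<Rightarrow> nat \<Rightarrow> complex) \<Rightarrow> complex"
  assumes "M \<ge> 3"
    and "multilinear_form N m T"
  shows "form_normM M N m T \<le> form_norm N m T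
         \<and> form_norm N m T \<le> (rM M) powi (- int m) * form_normM M N m T"
proof
  show "form_normM M N m T \<le> form_norm N m T"
    using form_normM_le_form_norm[OF assms(2)] assms(1) by simp
  have "cball 0 (rM M) \<subseteq> D M"
    using cball_cos_subset_D[of M] rM_eq_cos[of M] assms(1) by simp
  then have "rM M ^ m * form_norm N m T \<le> form_normM M N m T"
    by (rule form_norm_le_form_normM[OF assms(2) rM_pos[OF assms(1)]])
  then show "form_norm N m T \<le> (rM M) powi (- int m) * form_normM M N m T"
    using rM_pos[OF assms(1)] by (simp add: power_int_minus field_simps)
qed

end
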